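(* Let $\gamma=\gamma(s)$, $s$ in an open interval containing $0$, be a smooth unit-speed curve in $\mathrm{Im}(\mathbb O)$ with $k_1=\|\gamma_{ss}\|>0$ everywhere, let $(I_4,I_1,I_2,I_3,I_5,I_6,I_7)$ be its $G_2$-frame, and let $(e_4,e_1,e_2,e_3,\overline e_1,\overline e_2,\overline e_3)$ be the associated complexified $G_2$-frame, with $\varphi_1,\varphi_2,\varphi_3$ as defined in the context. Then \begin{align*} e_{4s}&=\varphi_1 e_1+\overline{\varphi}_1\overline e_1,\\ e_{1s}&=-\overline{\varphi}_1 e_4+\varphi_2 e_2,\\ e_{2s}&=-\overline{\varphi}_2 e_1+\varphi_3 e_3-\tfrac{\sqrt{-1}}{\sqrt2}\varphi_1\overline e_3,\\ e_{3s}&=-\overline{\varphi}_3 e_2+\tfrac{\sqrt{-1}}{\sqrt2}\varphi_1\overline e_2,\\ \overline e_{1s}&=-\varphi_1 e_4+\overline{\varphi}_2\overline e_2,\\ \overline e_{2s}&=\tfrac{\sqrt{-1}}{\sqrt2}\overline{\varphi}_1 e_3-\varphi_2\overline e_1+\overline{\varphi}_3\overline e_3,\\ \overline e_{3s}&=-\tfrac{\sqrt{-1}}{\sqrt2}\overline{\varphi}_1 e_2-\varphi_3\overline e_2 . \end{align*}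
   Context: $\mathbb O$ denotes the octonions: every octonion is $a+bl$ with $a,b$ quaternions, with product $(a+bl)(c+dl)=(ac-d\bar b)+(\bar a d+cb)l$ (bar = quaternion conjugation), real basis $1,i,j,k,l,il,jl,kl$, conjugation $\overline{a+bl}=\bar a-bl$, inner product $\langle x,y\rangle=\frac12(\bar xy+\bar yx)$, $\mathrm{Im}(\mathbb O)=\{x:\langle x,1\rangle=0\}\cong\mathbb R^7$, and cross product $x\times y=\frac12(\bar yx-\bar xy)$ on $\mathrm{Im}(\mathbb O)$. $G_2$-frame of a unit-speed curve $\gamma(s)$ with $k_1=\|\gamma_{ss}\|>0$: $I_4=\gamma_s$, $I_1=I_{4s}/k_1$, $I_5=I_1\times I_4$, $\kappa_2=\sqrt{\|I_{1s}\|^2-\langle I_{1s},I_4\rangle^2-\langle I_{1s},I_5\rangle^2}$; if $\kappa_2>0$, $I_2=\kappa_2^{-1}(I_{1s}-\langle I_{1s},I_4\rangle I_4-\langle I_{1s},I_5\rangle I_5)$, while if $\kappa_2\equiv0$, $I_2$ is a smooth unit vector field orthogonal to $I_4,I_1,I_5$; then $I_3=I_1\times I_2$, $I_6=I_2\times I_4$, $I_7=I_3\times I_4$. Set $\rho_1=\langle I_{1s},I_5\rangle$, $\rho_2=\langle I_{2s},I_6\rangle$, $\rho_3=\langle I_{3s},I_7\rangle$, $\alpha=\langle I_{2s},I_3\rangle$, $\beta_1=\langle I_{2s},I_7\rangle$, $\beta_2=\langle I_{3s},I_6\rangle$, and $r=\frac1{\sqrt2}e^{-\sqrt{-1}\int_0^s\rho_1}$,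 $q=\frac1{\sqrt2}e^{-\sqrt{-1}\int_0^s\rho_2}$, $p=\frac1{\sqrt2}e^{-\sqrt{-1}\int_0^s\rho_3}$. In $\mathbb C\otimes_{\mathbb R}\mathbb O$ (with complex unit $\sqrt{-1}$ distinct from the octonion units, bar denoting complex conjugation $\overline{x_1+\sqrt{-1}x_2}=x_1-\sqrt{-1}x_2$ for $x_1,x_2\in\mathbb O$) the complexified $G_2$-frame is $e_4=I_4$, $e_1=r(I_1-\sqrt{-1}I_5)$, $e_2=q(I_2-\sqrt{-1}I_6)$, $e_3=-p(I_3-\sqrt{-1}I_7)$ and their complex conjugates $\overline e_1,\overline e_2,\overline e_3$. Finally $\varphi_1=k_1\overline r$, $\varphi_2=2\kappa_2 r\overline q$, $\varphi_3=-\sqrt2\,q^2r\,[2\alpha+\sqrt{-1}(\beta_1+\beta_2)]$. *)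

theory Defs
  imports "HOL-Analysis.Analysis"
begin

section \<open>Quaternions and octonions (Cayley--Dickson, as in the paper)\<close>

text \<open>A quaternion a0 + a1 i + a2 j + a3 k is the tuple (a0,a1,a2,a3).\<close>
type_synonym quat = "real \<times> real \<times> real \<times> real"

definition qmul :: "quat \<Rightarrow> quat \<Rightarrow> quat" where
  "qmul = (\<lambda>(a0,a1,a2,a3) (b0,b1,b2,b3).
     (a0*b0 - a1*b1 - a2*b2 - a3*b3,
      a0*b1 + a1*b0 + a2*b3 - a3*b2,
      a0*b2 - a1*b3 + a2*b0 + a3*b1,
      a0*b3 + a1*b2 - a2*b1 + a3*b0))"

definition qconj :: "quat \<Rightarrow> quat" where
  "qconj = (\<lambda>(a0,a1,a2,a3). (a0, -a1, -a2, -a3))"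

text \<open>An octonion a + b l is the pair (a,b) of quaternions; real basis
  1,i,j,k,l,il,jl,kl.\<close>
type_synonym oct = "quat \<times> quat"

definition omul :: "oct \<Rightarrow> oct \<Rightarrow> oct" where
  "omul = (\<lambda>(a,b) (c,d). (qmul a c - qmul d (qconj b), qmul (qconj a) d + qmul c b))"

definition oconj :: "oct \<Rightarrow> oct" where
  "oconj = (\<lambda>(a,b). (qconj a, - b))"

definition oone :: oct where
  "oone = ((1,0,0,0), 0)"

text \<open>The inner product: the octonion (1/2)(conj x * y + conj y * x) is real;
  we take its real part (coefficient of 1).\<close>
definition oinner :: "oct \<Rightarrow> oct \<Rightarrow> real" where
  "oinner x y = fst (fst ((1/2) *\<^sub>R (omul (oconj x) y + omul (oconj y) x)))"

definition onorm :: "oct \<Rightarrow> real" where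
  "onorm x = sqrt (oinner x x)"

definition ImO :: "oct set" where
  "ImO = {x. oinner x oone = 0}"

definition ocross :: "oct \<Rightarrow> oct \<Rightarrow> oct" where
  "ocross x y = (1/2) *\<^sub>R (omul (oconj y) x - omul (oconj x) y)"

text \<open>(x1,x2) represents x1 + sqrt(-1) x2.\<close>
type_synonym coct = "oct \<times> oct"

definition cscale :: "complex \<Rightarrow> coct \<Rightarrow> coct" where
  "cscale c = (\<lambda>(x1,x2). (Re c *\<^sub>R x1 - Im c *\<^sub>R x2, Re c *\<^sub>R x2 + Im c *\<^sub>R x1))"

definition cconj :: "coct \<Rightarrow> coct" where
  "cconj = (\<lambda>(x1,x2). (x1, - x2))"

definition emb :: "oct \<Rightarrow> coct" where
  "emb x = (x, 0)"

definition vd :: "(real \<Rightarrow> 'a::real_normed_vector) \<Rightarrow> real \<Rightarrow> 'a" where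
  "vd f s = vector_derivative f (at s)"

definition smooth_on :: "real set \<Rightarrow> (real \<Rightarrow> 'a::real_normed_vector) \<Rightarrow> bool" where
  "smooth_on J f \<longleftrightarrow> (\<exists>D :: nat \<Rightarrow> real \<Rightarrow> 'a. (\<forall>t\<in>J. D 0 t = f t) \<and>
      (\<forall>n. \<forall>t\<in>J. (D n has_vector_derivative D (Suc n) t) (at t)))"

definition sint :: "real \<Rightarrow> real \<Rightarrow> (real \<Rightarrow> real) \<Rightarrow> real" where
  "sint a b f = (if a \<le> b then integral {a..b} f else - integral {b..a} f)"

definition fI4 :: "(real \<Rightarrow> oct) \<Rightarrow> real \<Rightarrow> oct" where
  "fI4 \<gamma> = vd \<gamma>"

definition fk1 :: "(real \<Rightarrow> oct) \<Rightarrow> real \<Rightarrow> real" where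
  "fk1 \<gamma> s = onorm (vd (vd \<gamma>) s)"

definition fI1 :: "(real \<Rightarrow> oct) \<Rightarrow> real \<Rightarrow> oct" where
  "fI1 \<gamma> s = (1 / fk1 \<gamma> s) *\<^sub>R vd (fI4 \<gamma>) s"

definition fI5 :: "(real \<Rightarrow> oct) \<Rightarrow> real \<Rightarrow> oct" where
  "fI5 \<gamma> s = ocross (fI1 \<gamma> s) (fI4 \<gamma> s)"

definition fkappa2 :: "(real \<Rightarrow> oct) \<Rightarrow> real \<Rightarrow> real" where
  "fkappa2 \<gamma> s = sqrt ((onorm (vd (fI1 \<gamma>) s))\<^sup>2
      - (oinner (vd (fI1 \<gamma>) s) (fI4 \<gamma> s))\<^sup>2 - (oinner (vd (fI1 \<gamma>) s) (fI5 \<gamma> s))\<^sup>2)"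

text \<open>I2 in the case kappa2 > 0.\<close>
definition fI2pos :: "(real \<Rightarrow> oct) \<Rightarrow> real \<Rightarrow> oct" where
  "fI2pos \<gamma> s = (1 / fkappa2 \<gamma> s) *\<^sub>R (vd (fI1 \<gamma>) s
      - oinner (vd (fI1 \<gamma>) s) (fI4 \<gamma> s) *\<^sub>R fI4 \<gamma> s
      - oinner (vd (fI1 \<gamma>) s) (fI5 \<gamma> s) *\<^sub>R fI5 \<gamma> s)"

definition fI3 :: "(real \<Rightarrow> oct) \<Rightarrow> (real \<Rightarrow> oct) \<Rightarrow> real \<Rightarrow> oct" where
  "fI3 \<gamma> I2 s = ocross (fI1 \<gamma> s) (I2 s)"

definition fI6 :: "(real \<Rightarrow> oct) \<Rightarrow> (real \<Rightarrow> oct) \<Rightarrow> real \<Rightarrow> oct" where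
  "fI6 \<gamma> I2 s = ocross (I2 s) (fI4 \<gamma> s)"

definition fI7 :: "(real \<Rightarrow> oct) \<Rightarrow> (real \<Rightarrow> oct) \<Rightarrow> real \<Rightarrow> oct" where
  "fI7 \<gamma> I2 s = ocross (fI3 \<gamma> I2 s) (fI4 \<gamma> s)"

definition rho1 :: "(real \<Rightarrow> oct) \<Rightarrow> real \<Rightarrow> real" where
  "rho1 \<gamma> s = oinner (vd (fI1 \<gamma>) s) (fI5 \<gamma> s)"

definition rho2 :: "(real \<Rightarrow> oct) \<Rightarrow> (real \<Rightarrow> oct) \<Rightarrow> real \<Rightarrow> real" where
  "rho2 \<gamma> I2 s = oinner (vd I2 s) (fI6 \<gamma> I2 s)"

definition rho3 :: "(real \<Rightarrow> oct) \<Rightarrow> (real \<Rightarrow> oct) \<Rightarrow> real \<Rightarrow> real" where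
  "rho3 \<gamma> I2 s = oinner (vd (fI3 \<gamma> I2) s) (fI7 \<gamma> I2 s)"

definition galpha :: "(real \<Rightarrow> oct) \<Rightarrow> (real \<Rightarrow> oct) \<Rightarrow> real \<Rightarrow> real" where
  "galpha \<gamma> I2 s = oinner (vd I2 s) (fI3 \<gamma> I2 s)"

definition gbeta1 :: "(real \<Rightarrow> oct) \<Rightarrow> (real \<Rightarrow> oct) \<Rightarrow> real \<Rightarrow> real" where
  "gbeta1 \<gamma> I2 s = oinner (vd I2 s) (fI7 \<gamma> I2 s)"

definition gbeta2 :: "(real \<Rightarrow> oct) \<Rightarrow> (real \<Rightarrow> oct) \<Rightarrow> real \<Rightarrow> real" where
  "gbeta2 \<gamma> I2 s = oinner (vd (fI3 \<gamma> I2) s) (fI6 \<gamma> I2 s)"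

definition phase :: "(real \<Rightarrow> real) \<Rightarrow> real \<Rightarrow> complex" where
  "phase \<rho> s = complex_of_real (1 / sqrt 2) * exp (- \<i> * complex_of_real (sint 0 s \<rho>))"

definition cr :: "(real \<Rightarrow> oct) \<Rightarrow> real \<Rightarrow> complex" where
  "cr \<gamma> = phase (rho1 \<gamma>)"

definition cq :: "(real \<Rightarrow> oct) \<Rightarrow> (real \<Rightarrow> oct) \<Rightarrow> real \<Rightarrow> complex" where
  "cq \<gamma> I2 = phase (rho2 \<gamma> I2)"

definition cp :: "(real \<Rightarrow> oct) \<Rightarrow> (real \<Rightarrow> oct) \<Rightarrow> real \<Rightarrow> complex" where
  "cp \<gamma> I2 = phase (rho3 \<gamma> I2)"

definition ce4 :: "(real \<Rightarrow> oct) \<Rightarrow> real \<Rightarrow> coct" where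
  "ce4 \<gamma> s = emb (fI4 \<gamma> s)"

definition ce1 :: "(real \<Rightarrow> oct) \<Rightarrow> real \<Rightarrow> coct" where
  "ce1 \<gamma> s = cscale (cr \<gamma> s) (emb (fI1 \<gamma> s) - cscale \<i> (emb (fI5 \<gamma> s)))"

definition ce2 :: "(real \<Rightarrow> oct) \<Rightarrow> (real \<Rightarrow> oct) \<Rightarrow> real \<Rightarrow> coct" where
  "ce2 \<gamma> I2 s = cscale (cq \<gamma> I2 s) (emb (I2 s) - cscale \<i> (emb (fI6 \<gamma> I2 s)))"

definition ce3 :: "(real \<Rightarrow> oct) \<Rightarrow> (real \<Rightarrow> oct) \<Rightarrow> real \<Rightarrow> coct" where
  "ce3 \<gamma> I2 s = cscale (- cp \<gamma> I2 s) (emb (fI3 \<gamma> I2 s) - cscale \<i> (emb (fI7 \<gamma> I2 s)))"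

definition phi1 :: "(real \<Rightarrow> oct) \<Rightarrow> real \<Rightarrow> complex" where
  "phi1 \<gamma> s = complex_of_real (fk1 \<gamma> s) * cnj (cr \<gamma> s)"

definition phi2 :: "(real \<Rightarrow> oct) \<Rightarrow> (real \<Rightarrow> oct) \<Rightarrow> real \<Rightarrow> complex" where
  "phi2 \<gamma> I2 s = 2 * complex_of_real (fkappa2 \<gamma> s) * cr \<gamma> s * cnj (cq \<gamma> I2 s)"

definition phi3 :: "(real \<Rightarrow> oct) \<Rightarrow> (real \<Rightarrow> oct) \<Rightarrow> real \<Rightarrow> complex" where
  "phi3 \<gamma> I2 s = - complex_of_real (sqrt 2) * (cq \<gamma> I2 s)\<^sup>2 * cr \<gamma> s *
     (2 * complex_of_real (galpha \<gamma> I2 s)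
      + \<i> * complex_of_real (gbeta1 \<gamma> I2 s + gbeta2 \<gamma> I2 s))"

end

theory Submission
  imports Defs
begin

(* Differentiating the orthonormality relations of I4, I1, I2 gives the derivatives of these
   vectors, and the product rule for the cross product together with the multiplication table
   of the frame gives those of I3, I5, I6, I7 (1, I1, ..., I7 is an orthonormal basis of the
   octonions, so vectors are compared through their eight coordinates).  The phases satisfy
   r' = -i rho1 r, q' = -i rho2 q, p' = -i rho3 p, and since rho3 = -(rho1 + rho2) one gets
   p = sqrt 2 conj(r) conj(q).  Each complexified equation is then an identity between the
   complex coordinates of both sides along the real frame, which holds modulo
   r conj(r) = q conj(q) = 1/2. *)

section \<open>Octonion algebra\<close>

lemma oinner_eq_inner: "oinner x y = x \<bullet> y"
  by (simp add: oinner_def omul_def oconj_def qmul_def qconj_def inner_prod_def split_beta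
      algebra_simps)

lemma onorm_eq_norm: "onorm x = norm x"
  by (simp add: onorm_def oinner_eq_inner norm_eq_sqrt_inner)

lemma inner_oone: "x \<bullet> oone = fst (fst x)"
  by (simp add: oone_def inner_prod_def split_beta)

lemma ImO_iff_inner_oone: "x \<in> ImO \<longleftrightarrow> x \<bullet> oone = 0"
  by (simp add: ImO_def oinner_eq_inner)

lemma ImO_cases:
  assumes "x \<in> ImO"
  obtains a1 a2 a3 b0 b1 b2 b3 where "x = ((0, a1, a2, a3), (b0, b1, b2, b3))"
  using assms by (cases x) (auto simp: ImO_iff_inner_oone inner_oone)

lemma bounded_bilinear_ocross: "bounded_bilinear ocross"
proof -
  have "bilinear ocross"
    by (simp add: bilinear_def linear_iff ocross_def omul_def oconj_def qmul_def qconj_def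
        split_beta algebra_simps)
  then show ?thesis
    by (rule bilinear_conv_bounded_bilinear[THEN iffD1])
qed

lemmas ocross_add_left = bounded_bilinear.add_left[OF bounded_bilinear_ocross]
lemmas ocross_add_right = bounded_bilinear.add_right[OF bounded_bilinear_ocross]
lemmas ocross_diff_left = bounded_bilinear.diff_left[OF bounded_bilinear_ocross]
lemmas ocross_diff_right = bounded_bilinear.diff_right[OF bounded_bilinear_ocross]
lemmas ocross_minus_left = bounded_bilinear.minus_left[OF bounded_bilinear_ocross]
lemmas ocross_minus_right = bounded_bilinear.minus_right[OF bounded_bilinear_ocross]
lemmas ocross_scaleR_left = bounded_bilinear.scaleR_left[OF bounded_bilinear_ocross]
lemmas ocross_scaleR_right = bounded_bilinear.scaleR_right[OF bounded_bilinear_ocross]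
lemmas ocross_zero_left [simp] = bounded_bilinear.zero_left[OF bounded_bilinear_ocross]
lemmas ocross_zero_right [simp] = bounded_bilinear.zero_right[OF bounded_bilinear_ocross]

lemmas ocross_linear = ocross_add_left ocross_add_right ocross_diff_left ocross_diff_right
  ocross_minus_left ocross_minus_right ocross_scaleR_left ocross_scaleR_right

lemma ocross_anticommute: "ocross x y = - ocross y x"
  by (simp add: ocross_def algebra_simps)

lemma ocross_self [simp]: "ocross x x = 0"
  by (simp add: ocross_def)

lemma ocross_in_ImO: "ocross x y \<in> ImO"
  by (simp add: ImO_iff_inner_oone inner_oone ocross_def omul_def oconj_def qmul_def qconj_def
      split_beta algebra_simps)

lemma ocross_triple:
  assumes "x \<in> ImO" "y \<in> ImO" "z \<in> ImO"
  shows "ocross x y \<bullet> z = x \<bullet> ocross y z"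
  using assms
  by (elim ImO_cases) (simp add: ocross_def omul_def oconj_def qmul_def qconj_def inner_prod_def
      algebra_simps)

lemma ocross_ocross_polarized:
  assumes "x \<in> ImO" "y \<in> ImO" "z \<in> ImO"
  shows "ocross x (ocross y z) + ocross y (ocross x z) =
    (x \<bullet> z) *\<^sub>R y + (y \<bullet> z) *\<^sub>R x - (2 * (x \<bullet> y)) *\<^sub>R z"
  using assms
  by (elim ImO_cases) (simp add: ocross_def omul_def oconj_def qmul_def qconj_def inner_prod_def
      algebra_simps)

lemma inner_ocross_left_self:
  assumes "x \<in> ImO" "y \<in> ImO"
  shows "ocross x y \<bullet> x = 0"
proof -
  have "ocross x y \<bullet> x = x \<bullet> ocross y x"
    using ocross_triple assms by blast
  also have "\<dots> = - (ocross x y \<bullet> x)"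
    by (metis ocross_anticommute inner_commute inner_minus_right)
  finally show ?thesis
    by simp
qed

lemma inner_ocross_right_self:
  assumes "x \<in> ImO" "y \<in> ImO"
  shows "ocross x y \<bullet> y = 0"
  using ocross_triple[OF assms assms(2)] by simp

lemma ocross_ocross_same:
  assumes "x \<in> ImO" "y \<in> ImO"
  shows "ocross x (ocross x y) = (x \<bullet> y) *\<^sub>R x - (x \<bullet> x) *\<^sub>R y"
proof -
  have "ocross x (ocross x y) + ocross x (ocross x y) =
      ((x \<bullet> y) *\<^sub>R x - (x \<bullet> x) *\<^sub>R y) + ((x \<bullet> y) *\<^sub>R x - (x \<bullet> x) *\<^sub>R y)"
    using ocross_ocross_polarized[OF assms(1) assms]
    by (simp add: algebra_simps scaleR_2[symmetric])
  then show ?thesis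
    by (metis scaleR_2 scaleR_cancel_left zero_neq_numeral)
qed

lemma inner_ocross_ocross:
  assumes "x \<in> ImO" "y \<in> ImO" "z \<in> ImO"
  shows "ocross x y \<bullet> ocross x z = (x \<bullet> x) * (y \<bullet> z) - (x \<bullet> y) * (x \<bullet> z)"
proof -
  have "ocross x y \<bullet> ocross x z = - (y \<bullet> ocross x (ocross x z))"
    using ocross_triple[OF assms(2,1) ocross_in_ImO] ocross_anticommute[of x y] by simp
  also have "\<dots> = (x \<bullet> x) * (y \<bullet> z) - (x \<bullet> y) * (x \<bullet> z)"
    by (simp add: ocross_ocross_same[OF assms(1,3)] algebra_simps inner_commute)
  finally show ?thesis .
qed

lemma ocross_ocross_left:
  assumes "x \<in> ImO" "y \<in> ImO" "z \<in> ImO"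
  shows "ocross (ocross x y) z =
    - ocross x (ocross y z) + (2 * (x \<bullet> z)) *\<^sub>R y - (x \<bullet> y) *\<^sub>R z - (y \<bullet> z) *\<^sub>R x"
proof -
  have "ocross (ocross x y) z = - ocross z (ocross x y)"
    by (rule ocross_anticommute)
  also have "\<dots> = ocross x (ocross z y) - (z \<bullet> y) *\<^sub>R x - (x \<bullet> y) *\<^sub>R z + (2 * (z \<bullet> x)) *\<^sub>R y"
    using ocross_ocross_polarized[OF assms(3,1,2)] by (simp add: algebra_simps)
  finally show ?thesis
    by (simp add: ocross_anticommute[of z y] ocross_minus_right inner_commute)
qed

section \<open>Orthonormal bases adapted to the cross product\<close>

locale g2_basis =
  fixes I1 I2 I3 I4 I5 I6 I7 :: oct
  assumes imaginary: "I1 \<in> ImO" "I2 \<in> ImO" "I4 \<in> ImO"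
    and unit: "I1 \<bullet> I1 = 1" "I2 \<bullet> I2 = 1" "I4 \<bullet> I4 = 1"
    and orthogonal: "I1 \<bullet> I2 = 0" "I1 \<bullet> I4 = 0" "I2 \<bullet> I4 = 0" "I2 \<bullet> ocross I1 I4 = 0"
    and I3_def: "I3 = ocross I1 I2" and I5_def: "I5 = ocross I1 I4"
    and I6_def: "I6 = ocross I2 I4" and I7_def: "I7 = ocross I3 I4"
begin

lemma imaginary_derived: "I3 \<in> ImO" "I5 \<in> ImO" "I6 \<in> ImO" "I7 \<in> ImO"
  by (simp_all add: I3_def I5_def I6_def I7_def ocross_in_ImO)

lemma inner_I3_I4: "I3 \<bullet> I4 = 0"
proof -
  have "I3 \<bullet> I4 = - (I1 \<bullet> ocross I4 I2)"
    using ocross_triple[OF imaginary] I3_def ocross_anticommute[of I2 I4] by simp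
  also have "I1 \<bullet> ocross I4 I2 = 0"
    using ocross_triple[of I1 I4 I2] imaginary orthogonal(4) by (simp add: inner_commute)
  finally show ?thesis
    by simp
qed

lemma I7_eq: "I7 = - ocross I1 I6"
  using ocross_ocross_left[OF imaginary] I7_def I3_def I6_def orthogonal by simp

lemma inner_I1_I6: "I1 \<bullet> I6 = 0"
  using ocross_triple[OF imaginary] inner_I3_I4 I3_def I6_def by simp

lemma unit_derived: "I3 \<bullet> I3 = 1" "I5 \<bullet> I5 = 1" "I6 \<bullet> I6 = 1" "I7 \<bullet> I7 = 1"
proof -
  show "I3 \<bullet> I3 = 1"
    using inner_ocross_ocross[of I1 I2 I2] imaginary unit orthogonal by (simp add: I3_def)
  then show "I5 \<bullet> I5 = 1" "I6 \<bullet> I6 = 1" "I7 \<bullet> I7 = 1"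
    using inner_ocross_ocross[of I1 I4 I4] inner_ocross_ocross[of I2 I4 I4]
      inner_ocross_ocross[of I3 I4 I4] imaginary imaginary_derived unit orthogonal inner_I3_I4
    by (simp_all add: I5_def I6_def I7_def)
qed

lemma orthogonal_derived:
  "I1 \<bullet> I3 = 0" "I1 \<bullet> I5 = 0" "I1 \<bullet> I6 = 0" "I1 \<bullet> I7 = 0"
  "I2 \<bullet> I3 = 0" "I2 \<bullet> I5 = 0" "I2 \<bullet> I6 = 0" "I2 \<bullet> I7 = 0"
  "I3 \<bullet> I4 = 0" "I3 \<bullet> I5 = 0" "I3 \<bullet> I6 = 0" "I3 \<bullet> I7 = 0"
  "I4 \<bullet> I5 = 0" "I4 \<bullet> I6 = 0" "I4 \<bullet> I7 = 0"
  "I5 \<bullet> I6 = 0" "I5 \<bullet> I7 = 0" "I6 \<bullet> I7 = 0"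
proof -
  note im = imaginary imaginary_derived
  note ocross_flip = ocross_anticommute[of I2 I1] ocross_anticommute[of I4 I2]
  show "I1 \<bullet> I3 = 0" "I1 \<bullet> I5 = 0" "I1 \<bullet> I6 = 0"
    using inner_ocross_left_self im inner_I1_I6 by (simp_all add: I3_def I5_def inner_commute)
  show "I1 \<bullet> I7 = 0"
    using inner_ocross_left_self[of I1 I6] im I7_eq by (simp add: inner_commute)
  show "I2 \<bullet> I3 = 0" "I2 \<bullet> I5 = 0" "I2 \<bullet> I6 = 0"
    using inner_ocross_right_self[of I1 I2] inner_ocross_left_self[of I2 I4] im orthogonal(4)
    by (simp_all add: I3_def I5_def I6_def inner_commute)
  show "I2 \<bullet> I7 = 0"
    using ocross_triple[of I3 I4 I2] inner_ocross_ocross[of I2 I1 I4] im orthogonal ocross_flip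
    by (simp add: I7_def I3_def I6_def inner_commute)
  show "I3 \<bullet> I4 = 0"
    by (rule inner_I3_I4)
  show "I3 \<bullet> I5 = 0"
    using inner_ocross_ocross[of I1 I2 I4] im orthogonal by (simp add: I3_def I5_def)
  show "I3 \<bullet> I6 = 0"
    using inner_ocross_ocross[of I2 I1 I4] im orthogonal ocross_flip
    by (simp add: I3_def I6_def inner_commute)
  show "I3 \<bullet> I7 = 0"
    using inner_ocross_left_self[of I3 I4] im by (simp add: I7_def inner_commute)
  show "I4 \<bullet> I5 = 0" "I4 \<bullet> I6 = 0" "I4 \<bullet> I7 = 0"
    using inner_ocross_right_self im by (simp_all add: I5_def I6_def I7_def inner_commute)
  show "I5 \<bullet> I6 = 0" "I5 \<bullet> I7 = 0" "I6 \<bullet> I7 = 0"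
    using inner_ocross_ocross[of I4 I1 I2] inner_ocross_ocross[of I4 I1 I3]
      inner_ocross_ocross[of I4 I2 I3] ocross_anticommute[of _ I4] im unit orthogonal
      inner_I3_I4 \<open>I1 \<bullet> I3 = 0\<close> \<open>I2 \<bullet> I3 = 0\<close>
    by (simp_all add: I5_def I6_def I7_def inner_commute)
qed

lemma inner_basis_oone:
  "I1 \<bullet> oone = 0" "I2 \<bullet> oone = 0" "I3 \<bullet> oone = 0" "I4 \<bullet> oone = 0"
  "I5 \<bullet> oone = 0" "I6 \<bullet> oone = 0" "I7 \<bullet> oone = 0"
  using imaginary imaginary_derived by (simp_all add: ImO_iff_inner_oone)

lemmas inner_basis = unit unit_derived orthogonal(1-3) orthogonal_derived inner_basis_oone
  orthogonal(1-3)[THEN trans[OF inner_commute]] orthogonal_derived[THEN trans[OF inner_commute]]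
  inner_basis_oone[THEN trans[OF inner_commute]]

lemma ocross_basis:
  "ocross I1 I2 = I3" "ocross I1 I4 = I5" "ocross I2 I4 = I6" "ocross I3 I4 = I7"
  "ocross I2 I1 = - I3" "ocross I4 I1 = - I5" "ocross I4 I2 = - I6" "ocross I4 I3 = - I7"
  "ocross I1 I3 = - I2" "ocross I3 I1 = I2" "ocross I1 I6 = - I7" "ocross I1 I7 = I6"
  "ocross I5 I4 = - I1" "ocross I6 I4 = - I2" "ocross I7 I4 = - I3" "ocross I5 I2 = - I7"
proof -
  note im = imaginary imaginary_derived
  show "ocross I1 I2 = I3" "ocross I1 I4 = I5" "ocross I2 I4 = I6" "ocross I3 I4 = I7"
    by (simp_all add: I3_def I5_def I6_def I7_def)
  then show "ocross I2 I1 = - I3" "ocross I4 I1 = - I5" "ocross I4 I2 = - I6" "ocross I4 I3 = - I7"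
    by (simp_all add: ocross_anticommute[of _ I1] ocross_anticommute[of I4])
  show "ocross I1 I3 = - I2"
    using ocross_ocross_same[of I1 I2] im unit orthogonal by (simp add: I3_def)
  then show "ocross I3 I1 = I2"
    by (simp add: ocross_anticommute[of I3])
  show "ocross I1 I6 = - I7" "ocross I1 I7 = I6"
    using ocross_ocross_same[of I1 I6] im unit orthogonal_derived
    by (simp_all add: I7_eq ocross_minus_right)
  show "ocross I5 I4 = - I1" "ocross I6 I4 = - I2" "ocross I7 I4 = - I3"
    using ocross_ocross_left[of _ I4 I4] im unit orthogonal inner_I3_I4
    by (simp_all add: I5_def I6_def I7_def)
  have "ocross I5 I2 = - ocross I1 (ocross I4 I2)"
    using ocross_ocross_left[of I1 I4 I2] im orthogonal by (simp add: I5_def inner_commute)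
  then show "ocross I5 I2 = - I7"
    by (simp add: \<open>ocross I4 I2 = - I6\<close> ocross_minus_right I7_eq)
qed

lemma eq_if_inner_basis_eq:
  assumes "x \<bullet> oone = y \<bullet> oone" "x \<bullet> I1 = y \<bullet> I1" "x \<bullet> I2 = y \<bullet> I2" "x \<bullet> I3 = y \<bullet> I3"
    "x \<bullet> I4 = y \<bullet> I4" "x \<bullet> I5 = y \<bullet> I5" "x \<bullet> I6 = y \<bullet> I6" "x \<bullet> I7 = y \<bullet> I7"
  shows "x = y"
proof -
  define B where "B = {oone, I1, I2, I3, I4, I5, I6, I7}"
  have oone_unit: "oone \<bullet> oone = 1"
    by (simp add: oone_def inner_prod_def)
  have neq: "a \<noteq> b" if "a \<bullet> b = 0" "a \<bullet> a = 1" for a b :: oct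
    using that by auto
  have "distinct [oone, I1, I2, I3, I4, I5, I6, I7]"
    by (simp; intro conjI; rule neq; simp add: inner_basis oone_unit)
  then have "card B = DIM(oct)"
    unfolding B_def using distinct_card by fastforce
  moreover have "independent B"
    using inner_basis oone_unit
    by (intro pairwise_orthogonal_independent) (auto simp: B_def pairwise_def orthogonal_def)
  ultimately have "UNIV \<subseteq> span B"
    using card_eq_dim[of B UNIV] by (simp add: B_def)
  moreover have "\<forall>b\<in>B. orthogonal (x - y) b"
    using assms by (simp add: B_def orthogonal_def inner_diff_left)
  ultimately have "orthogonal (x - y) (x - y)"
    using orthogonal_to_span by blast
  then show ?thesis
    by (simp add: orthogonal_def)
qed

end

section \<open>Smoothness\<close>

fun Ck_on :: "nat \<Rightarrow> real set \<Rightarrow> (real \<Rightarrow> 'a::real_normed_vector) \<Rightarrow> bool" where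
  "Ck_on 0 J f \<longleftrightarrow> continuous_on J f"
| "Ck_on (Suc n) J f \<longleftrightarrow> (\<exists>f'. (\<forall>t\<in>J. (f has_vector_derivative f' t) (at t)) \<and> Ck_on n J f')"

lemma continuous_on_if_vector_derivative:
  "(\<forall>t\<in>J. (f has_vector_derivative f' t) (at t)) \<Longrightarrow> continuous_on J f"
  by (meson continuous_at_imp_continuous_on has_vector_derivative_continuous)

lemma Ck_on_SucI:
  "(\<And>t. t \<in> J \<Longrightarrow> (f has_vector_derivative f' t) (at t)) \<Longrightarrow> Ck_on n J f' \<Longrightarrow> Ck_on (Suc n) J f"
  by auto

lemma Ck_on_Suc_imp: "Ck_on (Suc n) J f \<Longrightarrow> Ck_on n J f"
  by (induction n arbitrary: f) (auto intro: continuous_on_if_vector_derivative)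

lemma Ck_on_Suc_vd:
  assumes "open J" "Ck_on (Suc n) J f"
  shows "\<forall>t\<in>J. (f has_vector_derivative vd f t) (at t)" and "Ck_on n J (vd f)"
proof -
  obtain f' where f': "\<forall>t\<in>J. (f has_vector_derivative f' t) (at t)" and "Ck_on n J f'"
    using assms(2) by auto
  moreover have vd_f: "t \<in> J \<Longrightarrow> vd f t = f' t" for t
    using f' by (simp add: vd_def vector_derivative_at)
  ultimately show "\<forall>t\<in>J. (f has_vector_derivative vd f t) (at t)"
    by simp
  show "Ck_on n J (vd f)"
  proof (cases n)
    case 0
    then show ?thesis
      using \<open>Ck_on n J f'\<close> vd_f continuous_on_cong by fastforce
  next
    case (Suc m)
    then obtain f'' where "\<forall>t\<in>J. (f' has_vector_derivative f'' t) (at t)" "Ck_on m J f''"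
      using \<open>Ck_on n J f'\<close> by auto
    then have "\<forall>t\<in>J. (vd f has_vector_derivative f'' t) (at t)"
      using vd_f assms(1) has_vector_derivative_transform_within_open by metis
    with \<open>Ck_on m J f''\<close> Suc show ?thesis
      by auto
  qed
qed

lemma smooth_on_iff_Ck_on:
  assumes "open J"
  shows "smooth_on J f \<longleftrightarrow> (\<forall>n. Ck_on n J f)"
proof
  assume "smooth_on J f"
  then obtain D :: "nat \<Rightarrow> real \<Rightarrow> 'a" where D0: "\<forall>t\<in>J. D 0 t = f t"
    and D: "\<forall>n. \<forall>t\<in>J. (D n has_vector_derivative D (Suc n) t) (at t)"
    unfolding smooth_on_def by blast
  have "Ck_on n J (D k)" for n k
  proof (induction n arbitrary: k)
    case 0
    then show ?case
      using D continuous_on_if_vector_derivative by simp blast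
  next
    case (Suc n)
    then show ?case
      using D by (simp only: Ck_on.simps) blast
  qed
  moreover have "\<forall>t\<in>J. (f has_vector_derivative D 1 t) (at t)"
    using has_vector_derivative_transform_within_open[of "D 0" _ _ J f] D D0 assms by simp
  ultimately have "Ck_on (Suc n) J f" for n
    by auto
  then show "\<forall>n. Ck_on n J f"
    using Ck_on_Suc_imp by blast
next
  assume Ck: "\<forall>n. Ck_on n J f"
  have iter: "Ck_on m J ((vd ^^ n) f)" for n m
  proof (induction n arbitrary: m)
    case 0
    then show ?case
      using Ck by simp
  next
    case (Suc n)
    then show ?case
      using Ck_on_Suc_vd(2)[OF assms, of m "(vd ^^ n) f"] by simp
  qed
  have "\<forall>t\<in>J. ((vd ^^ n) f has_vector_derivative vd ((vd ^^ n) f) t) (at t)" for n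
    using Ck_on_Suc_vd(1)[OF assms iter] .
  then show "smooth_on J f"
    unfolding smooth_on_def by (intro exI[of _ "\<lambda>n. (vd ^^ n) f"]) simp
qed

lemma Ck_on_const: "Ck_on n J (\<lambda>t. c :: 'a::real_normed_vector)"
  by (induction n arbitrary: c) (auto intro!: exI[of _ "\<lambda>t. 0"])

lemma Ck_on_add: "Ck_on n J f \<Longrightarrow> Ck_on n J g \<Longrightarrow> Ck_on n J (\<lambda>t. f t + g t)"
proof (induction n arbitrary: f g)
  case 0
  then show ?case
    by (simp add: continuous_on_add)
next
  case (Suc n)
  then obtain f' g' where "\<forall>t\<in>J. (f has_vector_derivative f' t) (at t)" "Ck_on n J f'"
    and "\<forall>t\<in>J. (g has_vector_derivative g' t) (at t)" "Ck_on n J g'"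
    by auto
  with Suc.IH show ?case
    by (auto intro!: exI[of _ "\<lambda>t. f' t + g' t"] has_vector_derivative_add)
qed

lemma Ck_on_bilinear:
  assumes "bounded_bilinear P"
  shows "Ck_on n J f \<Longrightarrow> Ck_on n J g \<Longrightarrow> Ck_on n J (\<lambda>t. P (f t) (g t))"
proof (induction n arbitrary: f g)
  case 0
  then show ?case
    by (simp add: bounded_bilinear.continuous_on[OF assms])
next
  case (Suc n)
  then obtain f' g' where f': "\<forall>t\<in>J. (f has_vector_derivative f' t) (at t)" "Ck_on n J f'"
    and g': "\<forall>t\<in>J. (g has_vector_derivative g' t) (at t)" "Ck_on n J g'"
    by auto
  have "((\<lambda>t. P (f t) (g t)) has_vector_derivative P (f t) (g' t) + P (f' t) (g t)) (at t)"
    if "t \<in> J" for t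
    using bounded_bilinear.has_vector_derivative[OF assms f'(1)[rule_format, OF that]
        g'(1)[rule_format, OF that]] .
  moreover have "Ck_on n J f" "Ck_on n J g"
    using Suc.prems Ck_on_Suc_imp by blast+
  then have "Ck_on n J (\<lambda>t. P (f t) (g' t) + P (f' t) (g t))"
    using Suc.IH f'(2) g'(2) by (intro Ck_on_add)
  ultimately show ?case
    by (rule Ck_on_SucI)
qed

lemma Ck_on_minus: "Ck_on n J f \<Longrightarrow> Ck_on n J (\<lambda>t. - f t)"
  using Ck_on_bilinear[OF bounded_bilinear_scaleR Ck_on_const[of n J "-1"]] by simp

lemma Ck_on_inverse:
  "Ck_on n J f \<Longrightarrow> (\<forall>t\<in>J. f t \<noteq> (0::real)) \<Longrightarrow> Ck_on n J (\<lambda>t. inverse (f t))"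
proof (induction n arbitrary: f)
  case 0
  then show ?case
    by (simp add: continuous_on_inverse)
next
  case (Suc n)
  then obtain f' where f': "\<forall>t\<in>J. (f has_vector_derivative f' t) (at t)" "Ck_on n J f'"
    by auto
  have "((\<lambda>t. inverse (f t)) has_vector_derivative
      - (f' t * (inverse (f t) * inverse (f t)))) (at t)" if "t \<in> J" for t
    using DERIV_inverse_fun[of f "f' t" t] f'(1) Suc.prems(2) that
    by (simp add: has_real_derivative_iff_has_vector_derivative power2_eq_square)
  moreover have "Ck_on n J (\<lambda>t. inverse (f t))"
    using Suc Ck_on_Suc_imp by blast
  then have "Ck_on n J (\<lambda>t. - (f' t * (inverse (f t) * inverse (f t))))"
    using f'(2) Ck_on_bilinear[OF bounded_bilinear_mult] Ck_on_minus by blast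
  ultimately show ?case
    by (rule Ck_on_SucI)
qed

lemma Ck_on_sqrt:
  "Ck_on n J f \<Longrightarrow> (\<forall>t\<in>J. f t > (0::real)) \<Longrightarrow> Ck_on n J (\<lambda>t. sqrt (f t))"
proof (induction n arbitrary: f)
  case 0
  then show ?case
    by (simp add: continuous_on_real_sqrt)
next
  case (Suc n)
  then obtain f' where f': "\<forall>t\<in>J. (f has_vector_derivative f' t) (at t)" "Ck_on n J f'"
    by auto
  have "((\<lambda>t. sqrt (f t)) has_vector_derivative f' t * (inverse (sqrt (f t)) * (1/2))) (at t)"
    if "t \<in> J" for t
  proof -
    have "(f has_real_derivative f' t) (at t)"
      using f'(1) that has_real_derivative_iff_has_vector_derivative by blast
    from DERIV_chain2[OF DERIV_real_sqrt this] Suc.prems(2) that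
    have "((\<lambda>t. sqrt (f t)) has_real_derivative inverse (sqrt (f t)) / 2 * f' t) (at t)"
      by blast
    then show ?thesis
      by (simp add: has_real_derivative_iff_has_vector_derivative mult.commute)
  qed
  moreover have "Ck_on n J (\<lambda>t. sqrt (f t))"
    using Suc.IH[OF Ck_on_Suc_imp[OF Suc.prems(1)] Suc.prems(2)] .
  then have "Ck_on n J (\<lambda>t. inverse (sqrt (f t)))"
    using Ck_on_inverse Suc.prems(2) by force
  then have "Ck_on n J (\<lambda>t. f' t * (inverse (sqrt (f t)) * (1/2)))"
    using f'(2) Ck_on_bilinear[OF bounded_bilinear_mult] Ck_on_const by blast
  ultimately show ?case
    by (rule Ck_on_SucI)
qed

lemma smooth_on_eq: "smooth_on J f \<Longrightarrow> (\<And>t. t \<in> J \<Longrightarrow> f t = g t) \<Longrightarrow> smooth_on J g"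
  unfolding smooth_on_def by metis

context
  fixes J :: "real set"
  assumes open_J: "open J"
begin

lemma smooth_on_has_vector_derivative:
  "smooth_on J f \<Longrightarrow> t \<in> J \<Longrightarrow> (f has_vector_derivative vd f t) (at t)"
  using Ck_on_Suc_vd(1)[OF open_J] smooth_on_iff_Ck_on[OF open_J] by blast

lemma smooth_on_vd: "smooth_on J f \<Longrightarrow> smooth_on J (vd f)"
  using Ck_on_Suc_vd(2)[OF open_J] smooth_on_iff_Ck_on[OF open_J] by blast

lemma smooth_on_continuous_on: "smooth_on J f \<Longrightarrow> continuous_on J f"
  using smooth_on_iff_Ck_on[OF open_J] Ck_on.simps(1) by blast

lemma smooth_on_add: "smooth_on J f \<Longrightarrow> smooth_on J g \<Longrightarrow> smooth_on J (\<lambda>t. f t + g t)"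
  unfolding smooth_on_iff_Ck_on[OF open_J] using Ck_on_add by blast

lemma smooth_on_minus: "smooth_on J f \<Longrightarrow> smooth_on J (\<lambda>t. - f t)"
  unfolding smooth_on_iff_Ck_on[OF open_J] using Ck_on_minus by blast

lemma smooth_on_diff: "smooth_on J f \<Longrightarrow> smooth_on J g \<Longrightarrow> smooth_on J (\<lambda>t. f t - g t)"
  using smooth_on_add[of f "\<lambda>t. - g t"] smooth_on_minus[of g] by simp

lemma smooth_on_bilinear:
  "bounded_bilinear P \<Longrightarrow> smooth_on J f \<Longrightarrow> smooth_on J g \<Longrightarrow>
    smooth_on J (\<lambda>t. P (f t) (g t))"
  unfolding smooth_on_iff_Ck_on[OF open_J] using Ck_on_bilinear by blast

lemmas smooth_on_scaleR = smooth_on_bilinear[OF bounded_bilinear_scaleR]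
lemmas smooth_on_inner = smooth_on_bilinear[OF bounded_bilinear_inner]
lemmas smooth_on_ocross = smooth_on_bilinear[OF bounded_bilinear_ocross]

lemma smooth_on_inverse:
  "smooth_on J f \<Longrightarrow> (\<forall>t\<in>J. f t \<noteq> (0::real)) \<Longrightarrow> smooth_on J (\<lambda>t. inverse (f t))"
  unfolding smooth_on_iff_Ck_on[OF open_J] using Ck_on_inverse by blast

lemma smooth_on_sqrt:
  "smooth_on J f \<Longrightarrow> (\<forall>t\<in>J. f t > (0::real)) \<Longrightarrow> smooth_on J (\<lambda>t. sqrt (f t))"
  unfolding smooth_on_iff_Ck_on[OF open_J] using Ck_on_sqrt by blast

lemma inner_derivative_eq_0:
  assumes "t \<in> J" "(f has_vector_derivative f') (at t)" "(g has_vector_derivative g') (at t)"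
    and "\<forall>u\<in>J. f u \<bullet> g u = c"
  shows "f' \<bullet> g t + f t \<bullet> g' = 0"
proof -
  have "((\<lambda>u. f u \<bullet> g u) has_vector_derivative (f t \<bullet> g' + f' \<bullet> g t)) (at t)"
    using bounded_bilinear.has_vector_derivative[OF bounded_bilinear_inner assms(2,3)] .
  moreover have "((\<lambda>u. f u \<bullet> g u) has_vector_derivative 0) (at t)"
    by (rule has_vector_derivative_transform_within_open[OF has_vector_derivative_const open_J
          assms(1)]) (use assms(4) in simp)
  ultimately show ?thesis
    using vector_derivative_unique_at by (simp add: add.commute)
qed

end

section \<open>The frame \<open>I\<^sub>4, I\<^sub>1, I\<^sub>5\<close> of a unit-speed curve\<close>

locale unit_speed_curve =
  fixes \<gamma> :: "real \<Rightarrow> oct" and J :: "real set"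
  assumes open_J: "open J"
    and smooth: "smooth_on J \<gamma>"
    and imaginary: "\<forall>s\<in>J. \<gamma> s \<in> ImO"
    and unit_speed: "\<forall>s\<in>J. norm (vd \<gamma> s) = 1"
    and curvature_pos: "\<forall>s\<in>J. fk1 \<gamma> s > 0"
begin

lemma smooth_I4: "smooth_on J (fI4 \<gamma>)"
  using smooth_on_vd[OF open_J smooth] by (simp add: fI4_def)

lemma has_vector_derivative_I4: "t \<in> J \<Longrightarrow> (fI4 \<gamma> has_vector_derivative vd (fI4 \<gamma>) t) (at t)"
  using smooth_on_has_vector_derivative[OF open_J smooth_I4] .

lemma fk1_eq_norm: "fk1 \<gamma> t = norm (vd (fI4 \<gamma>) t)"
  by (simp add: fk1_def fI4_def onorm_eq_norm)

lemma smooth_k1: "smooth_on J (fk1 \<gamma>)"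
proof -
  have "\<forall>t\<in>J. vd (fI4 \<gamma>) t \<bullet> vd (fI4 \<gamma>) t > 0"
    using curvature_pos by (simp add: fk1_eq_norm)
  then have "smooth_on J (\<lambda>t. sqrt (vd (fI4 \<gamma>) t \<bullet> vd (fI4 \<gamma>) t))"
    using smooth_on_vd[OF open_J smooth_I4] by (intro smooth_on_sqrt smooth_on_inner open_J)
  then show ?thesis
    by (rule smooth_on_eq) (simp add: fk1_eq_norm norm_eq_sqrt_inner)
qed

lemma fk1_nonzero: "t \<in> J \<Longrightarrow> fk1 \<gamma> t \<noteq> 0"
  using curvature_pos by fastforce

lemma vd_I4: "t \<in> J \<Longrightarrow> vd (fI4 \<gamma>) t = fk1 \<gamma> t *\<^sub>R fI1 \<gamma> t"
  by (simp add: fI1_def fk1_nonzero)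

lemma smooth_I1: "smooth_on J (fI1 \<gamma>)"
proof -
  have "smooth_on J (\<lambda>t. inverse (fk1 \<gamma> t) *\<^sub>R vd (fI4 \<gamma>) t)"
    using smooth_k1 curvature_pos smooth_on_vd[OF open_J smooth_I4]
    by (intro smooth_on_scaleR smooth_on_inverse open_J) auto
  then show ?thesis
    by (rule smooth_on_eq) (simp add: fI1_def divide_inverse)
qed

lemma smooth_I5: "smooth_on J (fI5 \<gamma>)"
  using smooth_on_ocross[OF open_J smooth_I1 smooth_I4] by (simp add: fI5_def[abs_def])

lemma has_vector_derivative_I1: "t \<in> J \<Longrightarrow> (fI1 \<gamma> has_vector_derivative vd (fI1 \<gamma>) t) (at t)"
  using smooth_on_has_vector_derivative[OF open_J smooth_I1] .

lemma has_vector_derivative_I5: "t \<in> J \<Longrightarrow> (fI5 \<gamma> has_vector_derivative vd (fI5 \<gamma>) t) (at t)"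
  using smooth_on_has_vector_derivative[OF open_J smooth_I5] .

lemma I4_ImO: "t \<in> J \<Longrightarrow> fI4 \<gamma> t \<in> ImO"
  using inner_derivative_eq_0[OF open_J _ smooth_on_has_vector_derivative[OF open_J smooth]
      has_vector_derivative_const, of t oone 0] imaginary
  by (simp add: ImO_iff_inner_oone fI4_def)

lemma I1_ImO: "t \<in> J \<Longrightarrow> fI1 \<gamma> t \<in> ImO"
  using inner_derivative_eq_0[OF open_J _ has_vector_derivative_I4 has_vector_derivative_const,
      of t oone 0] I4_ImO
  by (simp add: ImO_iff_inner_oone vd_I4 fk1_nonzero)

lemma I5_ImO: "fI5 \<gamma> t \<in> ImO"
  by (simp add: fI5_def ocross_in_ImO)

lemma inner_I4_I4: "t \<in> J \<Longrightarrow> fI4 \<gamma> t \<bullet> fI4 \<gamma> t = 1"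
  using unit_speed by (simp add: fI4_def power2_norm_eq_inner[symmetric])

lemma inner_I1_I4: "t \<in> J \<Longrightarrow> fI1 \<gamma> t \<bullet> fI4 \<gamma> t = 0"
  using inner_derivative_eq_0[OF open_J _ has_vector_derivative_I4 has_vector_derivative_I4,
      of t 1] inner_I4_I4
  by (simp add: vd_I4 inner_commute fk1_nonzero)

lemma inner_I1_I1: "t \<in> J \<Longrightarrow> fI1 \<gamma> t \<bullet> fI1 \<gamma> t = 1"
  using fk1_nonzero
  by (simp add: fI1_def fk1_eq_norm power2_norm_eq_inner[symmetric] power_divide)

lemma inner_I5_I5: "t \<in> J \<Longrightarrow> fI5 \<gamma> t \<bullet> fI5 \<gamma> t = 1"
  using inner_ocross_ocross[OF I1_ImO I4_ImO I4_ImO] inner_I1_I1 inner_I4_I4 inner_I1_I4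
  by (simp add: fI5_def inner_commute)

lemma inner_I5_I4: "t \<in> J \<Longrightarrow> fI5 \<gamma> t \<bullet> fI4 \<gamma> t = 0"
  using inner_ocross_right_self[OF I1_ImO I4_ImO] by (simp add: fI5_def)

lemma inner_I5_I1: "t \<in> J \<Longrightarrow> fI5 \<gamma> t \<bullet> fI1 \<gamma> t = 0"
  using inner_ocross_left_self[OF I1_ImO I4_ImO] by (simp add: fI5_def)

lemma inner_vd_I1_I4: "t \<in> J \<Longrightarrow> vd (fI1 \<gamma>) t \<bullet> fI4 \<gamma> t = - fk1 \<gamma> t"
  using inner_derivative_eq_0[OF open_J _ has_vector_derivative_I1 has_vector_derivative_I4,
      of t 0] inner_I1_I4 inner_I1_I1
  by (simp add: vd_I4)

lemma inner_vd_I1_I1: "t \<in> J \<Longrightarrow> vd (fI1 \<gamma>) t \<bullet> fI1 \<gamma> t = 0"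
  using inner_derivative_eq_0[OF open_J _ has_vector_derivative_I1 has_vector_derivative_I1,
      of t 1] inner_I1_I1
  by (simp add: inner_commute)

lemma inner_vd_I1_oone: "t \<in> J \<Longrightarrow> vd (fI1 \<gamma>) t \<bullet> oone = 0"
  using inner_derivative_eq_0[OF open_J _ has_vector_derivative_I1 has_vector_derivative_const,
      of t oone 0] I1_ImO
  by (simp add: ImO_iff_inner_oone)

definition I1_normal :: "real \<Rightarrow> oct" where
  "I1_normal t = vd (fI1 \<gamma>) t - (vd (fI1 \<gamma>) t \<bullet> fI4 \<gamma> t) *\<^sub>R fI4 \<gamma> t - rho1 \<gamma> t *\<^sub>R fI5 \<gamma> t"

lemma vd_I1_eq_I1_normal:
  "t \<in> J \<Longrightarrow> vd (fI1 \<gamma>) t = - fk1 \<gamma> t *\<^sub>R fI4 \<gamma> t + I1_normal t + rho1 \<gamma> t *\<^sub>R fI5 \<gamma> t"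
  by (simp add: I1_normal_def inner_vd_I1_I4)

lemma fI2pos_eq_I1_normal: "fI2pos \<gamma> t = (1 / fkappa2 \<gamma> t) *\<^sub>R I1_normal t"
  by (simp add: fI2pos_def I1_normal_def rho1_def oinner_eq_inner)

lemma inner_I1_normal:
  assumes "t \<in> J"
  shows "I1_normal t \<bullet> oone = 0" "I1_normal t \<bullet> fI1 \<gamma> t = 0"
    "I1_normal t \<bullet> fI4 \<gamma> t = 0" "I1_normal t \<bullet> fI5 \<gamma> t = 0"
  using assms inner_vd_I1_oone I4_ImO I5_ImO inner_vd_I1_I1
    inner_I1_I4[THEN trans[OF inner_commute]] inner_I5_I1 inner_I4_I4 inner_I5_I4
    inner_I5_I4[THEN trans[OF inner_commute]] inner_I5_I5
  by (simp_all add: I1_normal_def inner_diff_left ImO_iff_inner_oone rho1_def oinner_eq_inner)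

lemma fkappa2_eq_norm: "t \<in> J \<Longrightarrow> fkappa2 \<gamma> t = norm (I1_normal t)"
  using inner_I4_I4 inner_I5_I5 inner_I5_I4
  by (simp add: fkappa2_def I1_normal_def onorm_eq_norm oinner_eq_inner rho1_def norm_eq_sqrt_inner
      inner_diff_left inner_diff_right inner_commute power2_eq_square algebra_simps)

lemma smooth_I1_normal: "smooth_on J I1_normal"
  using smooth_on_vd[OF open_J smooth_I1] smooth_I4 smooth_I5
  unfolding I1_normal_def[abs_def] rho1_def[abs_def] oinner_eq_inner
  by (intro smooth_on_diff smooth_on_scaleR smooth_on_inner open_J)

definition admissible_I2 :: "(real \<Rightarrow> oct) \<Rightarrow> bool" where
  "admissible_I2 I2 \<longleftrightarrow>
    (\<forall>s\<in>J. fkappa2 \<gamma> s > 0 \<and> I2 s = fI2pos \<gamma> s) \<or>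
    ((\<forall>s\<in>J. fkappa2 \<gamma> s = 0) \<and> smooth_on J I2 \<and>
     (\<forall>s\<in>J. I2 s \<in> ImO \<and> onorm (I2 s) = 1 \<and> oinner (I2 s) (fI4 \<gamma> s) = 0 \<and>
        oinner (I2 s) (fI1 \<gamma> s) = 0 \<and> oinner (I2 s) (fI5 \<gamma> s) = 0))"

text \<open>Both admissible choices of \<open>I\<^sub>2\<close> give the same structure equation for \<open>I\<^sub>1\<close>: when
  \<open>\<kappa>\<^sub>2 \<equiv> 0\<close> the normal part of \<open>I\<^sub>1'\<close> vanishes, so the freedom in \<open>I\<^sub>2\<close> is invisible.\<close>

lemma admissible_I2_properties:
  assumes "admissible_I2 I2"
  shows "smooth_on J I2 \<and>
    (\<forall>s\<in>J. I2 s \<in> ImO \<and> I2 s \<bullet> I2 s = 1 \<and> I2 s \<bullet> fI4 \<gamma> s = 0 \<and>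
      I2 s \<bullet> fI1 \<gamma> s = 0 \<and> I2 s \<bullet> fI5 \<gamma> s = 0) \<and>
    (\<forall>s\<in>J. fkappa2 \<gamma> s *\<^sub>R I2 s = I1_normal s)"
  using assms unfolding admissible_I2_def
proof
  assume pos: "\<forall>s\<in>J. fkappa2 \<gamma> s > 0 \<and> I2 s = fI2pos \<gamma> s"
  then have I2_eq: "I2 s = inverse (norm (I1_normal s)) *\<^sub>R I1_normal s" if "s \<in> J" for s
    using that by (simp add: fI2pos_eq_I1_normal fkappa2_eq_norm divide_inverse)
  have "smooth_on J (\<lambda>s. inverse (sqrt (I1_normal s \<bullet> I1_normal s)) *\<^sub>R I1_normal s)"
    using pos smooth_I1_normal
    by (intro smooth_on_scaleR smooth_on_inverse smooth_on_sqrt smooth_on_inner open_J)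
      (auto simp: fkappa2_eq_norm)
  then have "smooth_on J I2"
    by (rule smooth_on_eq) (simp add: I2_eq norm_eq_sqrt_inner)
  moreover have "(I2 s \<in> ImO \<and> I2 s \<bullet> I2 s = 1 \<and> I2 s \<bullet> fI4 \<gamma> s = 0 \<and>
    I2 s \<bullet> fI1 \<gamma> s = 0 \<and> I2 s \<bullet> fI5 \<gamma> s = 0) \<and> fkappa2 \<gamma> s *\<^sub>R I2 s = I1_normal s"
    if s: "s \<in> J" for s
  proof -
    have "norm (I1_normal s) \<noteq> 0"
      using pos s by (simp add: fkappa2_eq_norm)
    then show ?thesis
      using inner_I1_normal[OF s]
      by (simp add: I2_eq[OF s] fkappa2_eq_norm[OF s] ImO_iff_inner_oone dot_square_norm
          power2_eq_square)
  qed
  ultimately show ?thesis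
    by blast
next
  assume zero: "(\<forall>s\<in>J. fkappa2 \<gamma> s = 0) \<and> smooth_on J I2 \<and>
    (\<forall>s\<in>J. I2 s \<in> ImO \<and> onorm (I2 s) = 1 \<and> oinner (I2 s) (fI4 \<gamma> s) = 0 \<and>
      oinner (I2 s) (fI1 \<gamma> s) = 0 \<and> oinner (I2 s) (fI5 \<gamma> s) = 0)"
  moreover have "I1_normal s = 0" if "s \<in> J" for s
    using zero that fkappa2_eq_norm by fastforce
  ultimately show ?thesis
    by (auto simp: onorm_eq_norm oinner_eq_inner power2_norm_eq_inner[symmetric])
qed

end

section \<open>Structure equations of the \<open>G\<^sub>2\<close>-frame\<close>

lemma vd_ocross:
  assumes "(f has_vector_derivative f') (at t)" "(g has_vector_derivative g') (at t)"
  shows "vd (\<lambda>s. ocross (f s) (g s)) t = ocross (f t) g' + ocross f' (g t)"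
  using bounded_bilinear.has_vector_derivative[OF bounded_bilinear_ocross assms]
  by (simp add: vd_def vector_derivative_at)

locale g2_framed_curve = unit_speed_curve +
  fixes I2 :: "real \<Rightarrow> oct"
  assumes interval_J: "is_interval J" and zero_in_J: "0 \<in> J"
    and smooth_I2: "smooth_on J I2"
    and I2_orthonormal: "\<forall>s\<in>J. I2 s \<in> ImO \<and> I2 s \<bullet> I2 s = 1 \<and> I2 s \<bullet> fI4 \<gamma> s = 0 \<and>
      I2 s \<bullet> fI1 \<gamma> s = 0 \<and> I2 s \<bullet> fI5 \<gamma> s = 0"
    and kappa2_I2: "\<forall>s\<in>J. fkappa2 \<gamma> s *\<^sub>R I2 s = I1_normal s"

lemma (in unit_speed_curve) g2_framed_curve_if_admissible:
  assumes "admissible_I2 I2" "is_interval J" "0 \<in> J"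
  shows "g2_framed_curve \<gamma> J I2"
  using admissible_I2_properties[OF assms(1)] assms(2,3)
  by (intro g2_framed_curve.intro unit_speed_curve_axioms g2_framed_curve_axioms.intro) auto

context g2_framed_curve
begin

lemma vd_I1:
  "t \<in> J \<Longrightarrow> vd (fI1 \<gamma>) t = - fk1 \<gamma> t *\<^sub>R fI4 \<gamma> t + fkappa2 \<gamma> t *\<^sub>R I2 t + rho1 \<gamma> t *\<^sub>R fI5 \<gamma> t"
  using kappa2_I2 by (simp add: vd_I1_eq_I1_normal)

lemma g2_basis_at:
  "t \<in> J \<Longrightarrow> g2_basis (fI1 \<gamma> t) (I2 t) (fI3 \<gamma> I2 t) (fI4 \<gamma> t) (fI5 \<gamma> t) (fI6 \<gamma> I2 t) (fI7 \<gamma> I2 t)"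
  using I1_ImO I4_ImO inner_I1_I1 inner_I4_I4 inner_I1_I4 I2_orthonormal
  by unfold_locales (auto simp: fI3_def fI5_def fI6_def fI7_def inner_commute)

lemmas inner_frame = g2_basis.inner_basis[OF g2_basis_at]
lemmas ocross_frame = g2_basis.ocross_basis[OF g2_basis_at]
lemmas frame_eqI = g2_basis.eq_if_inner_basis_eq[OF g2_basis_at]

lemma smooth_I3: "smooth_on J (fI3 \<gamma> I2)"
  using smooth_on_ocross[OF open_J smooth_I1 smooth_I2] by (simp add: fI3_def[abs_def])

lemma smooth_I6: "smooth_on J (fI6 \<gamma> I2)"
  using smooth_on_ocross[OF open_J smooth_I2 smooth_I4] by (simp add: fI6_def[abs_def])

lemma smooth_I7: "smooth_on J (fI7 \<gamma> I2)"
  using smooth_on_ocross[OF open_J smooth_I3 smooth_I4] by (simp add: fI7_def[abs_def])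

lemmas has_vector_derivative_I2 = smooth_on_has_vector_derivative[OF open_J smooth_I2]
lemmas has_vector_derivative_I3 = smooth_on_has_vector_derivative[OF open_J smooth_I3]
lemmas has_vector_derivative_I6 = smooth_on_has_vector_derivative[OF open_J smooth_I6]
lemmas has_vector_derivative_I7 = smooth_on_has_vector_derivative[OF open_J smooth_I7]

lemmas inner_linear = inner_add_left inner_diff_left inner_scaleR_left inner_minus_left
  inner_add_right inner_diff_right inner_scaleR_right inner_minus_right

lemma vd_I5:
  assumes "t \<in> J"
  shows "vd (fI5 \<gamma>) t = fkappa2 \<gamma> t *\<^sub>R fI6 \<gamma> I2 t - rho1 \<gamma> t *\<^sub>R fI1 \<gamma> t"
proof -
  have "vd (fI5 \<gamma>) t = ocross (fI1 \<gamma> t) (vd (fI4 \<gamma>) t) + ocross (vd (fI1 \<gamma>) t) (fI4 \<gamma> t)"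
    using vd_ocross[OF has_vector_derivative_I1 has_vector_derivative_I4] assms
    by (simp add: fI5_def[abs_def])
  then show ?thesis
    using assms by (simp add: vd_I4 vd_I1 ocross_linear ocross_frame)
qed

lemma vd_I2:
  assumes t: "t \<in> J"
  shows "vd I2 t = - fkappa2 \<gamma> t *\<^sub>R fI1 \<gamma> t + galpha \<gamma> I2 t *\<^sub>R fI3 \<gamma> I2 t
    + rho2 \<gamma> I2 t *\<^sub>R fI6 \<gamma> I2 t + gbeta1 \<gamma> I2 t *\<^sub>R fI7 \<gamma> I2 t"
proof -
  note derivative_orthogonal = inner_derivative_eq_0[OF open_J t has_vector_derivative_I2[OF t]]
  have "vd I2 t \<bullet> oone = 0"
    using derivative_orthogonal[OF has_vector_derivative_const, of oone 0] I2_orthonormal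
    by (simp add: ImO_iff_inner_oone)
  moreover have "vd I2 t \<bullet> fI1 \<gamma> t = - fkappa2 \<gamma> t"
    using derivative_orthogonal[OF has_vector_derivative_I1[OF t], of 0] I2_orthonormal t
    by (simp add: vd_I1 inner_linear inner_frame)
  moreover have "vd I2 t \<bullet> I2 t = 0"
    using derivative_orthogonal[OF has_vector_derivative_I2[OF t], of 1] I2_orthonormal t
    by (simp add: inner_commute)
  moreover have "vd I2 t \<bullet> fI4 \<gamma> t = 0"
    using derivative_orthogonal[OF has_vector_derivative_I4[OF t], of 0] I2_orthonormal t
    by (simp add: vd_I4 inner_linear inner_frame)
  moreover have "vd I2 t \<bullet> fI5 \<gamma> t = 0"
    using derivative_orthogonal[OF has_vector_derivative_I5[OF t], of 0] I2_orthonormal t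
    by (simp add: vd_I5 inner_linear inner_frame)
  ultimately show ?thesis
    using t by (intro frame_eqI[OF t])
      (simp_all add: inner_linear inner_frame galpha_def rho2_def gbeta1_def oinner_eq_inner)
qed

lemma vd_I3:
  assumes t: "t \<in> J"
  shows "vd (fI3 \<gamma> I2) t = - galpha \<gamma> I2 t *\<^sub>R I2 t + (fk1 \<gamma> t + gbeta1 \<gamma> I2 t) *\<^sub>R fI6 \<gamma> I2 t
    - (rho1 \<gamma> t + rho2 \<gamma> I2 t) *\<^sub>R fI7 \<gamma> I2 t"
proof -
  have "vd (fI3 \<gamma> I2) t = ocross (fI1 \<gamma> t) (vd I2 t) + ocross (vd (fI1 \<gamma>) t) (I2 t)"
    using vd_ocross[OF has_vector_derivative_I1 has_vector_derivative_I2] t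
    by (simp add: fI3_def[abs_def])
  also have "\<dots> = - galpha \<gamma> I2 t *\<^sub>R I2 t + (fk1 \<gamma> t + gbeta1 \<gamma> I2 t) *\<^sub>R fI6 \<gamma> I2 t
    - (rho1 \<gamma> t + rho2 \<gamma> I2 t) *\<^sub>R fI7 \<gamma> I2 t"
    using t by (intro frame_eqI[OF t])
      (simp_all add: vd_I1 vd_I2 ocross_linear ocross_frame inner_linear inner_frame algebra_simps)
  finally show ?thesis .
qed

lemma vd_I6:
  assumes t: "t \<in> J"
  shows "vd (fI6 \<gamma> I2) t = - rho2 \<gamma> I2 t *\<^sub>R I2 t - (fk1 \<gamma> t + gbeta1 \<gamma> I2 t) *\<^sub>R fI3 \<gamma> I2 t
    - fkappa2 \<gamma> t *\<^sub>R fI5 \<gamma> t + galpha \<gamma> I2 t *\<^sub>R fI7 \<gamma> I2 t"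
proof -
  have "vd (fI6 \<gamma> I2) t = ocross (I2 t) (vd (fI4 \<gamma>) t) + ocross (vd I2 t) (fI4 \<gamma> t)"
    using vd_ocross[OF has_vector_derivative_I2 has_vector_derivative_I4] t
    by (simp add: fI6_def[abs_def])
  also have "\<dots> = - rho2 \<gamma> I2 t *\<^sub>R I2 t - (fk1 \<gamma> t + gbeta1 \<gamma> I2 t) *\<^sub>R fI3 \<gamma> I2 t
    - fkappa2 \<gamma> t *\<^sub>R fI5 \<gamma> t + galpha \<gamma> I2 t *\<^sub>R fI7 \<gamma> I2 t"
    using t by (intro frame_eqI[OF t])
      (simp_all add: vd_I2 vd_I4 ocross_linear ocross_frame inner_linear inner_frame algebra_simps)
  finally show ?thesis .
qed

lemma vd_I7:
  assumes t: "t \<in> J"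
  shows "vd (fI7 \<gamma> I2) t = - gbeta1 \<gamma> I2 t *\<^sub>R I2 t + (rho1 \<gamma> t + rho2 \<gamma> I2 t) *\<^sub>R fI3 \<gamma> I2 t
    - galpha \<gamma> I2 t *\<^sub>R fI6 \<gamma> I2 t"
proof -
  have "vd (fI7 \<gamma> I2) t = ocross (fI3 \<gamma> I2 t) (vd (fI4 \<gamma>) t) + ocross (vd (fI3 \<gamma> I2) t) (fI4 \<gamma> t)"
    using vd_ocross[OF has_vector_derivative_I3 has_vector_derivative_I4] t
    by (simp add: fI7_def[abs_def])
  also have "\<dots> = - gbeta1 \<gamma> I2 t *\<^sub>R I2 t + (rho1 \<gamma> t + rho2 \<gamma> I2 t) *\<^sub>R fI3 \<gamma> I2 t
    - galpha \<gamma> I2 t *\<^sub>R fI6 \<gamma> I2 t"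
    using t by (intro frame_eqI[OF t])
      (simp_all add: vd_I3 vd_I4 ocross_linear ocross_frame inner_linear inner_frame algebra_simps)
  finally show ?thesis .
qed

lemma rho3_eq: "t \<in> J \<Longrightarrow> rho3 \<gamma> I2 t = - (rho1 \<gamma> t + rho2 \<gamma> I2 t)"
  by (simp add: rho3_def oinner_eq_inner vd_I3 inner_linear inner_frame)

lemma gbeta2_eq: "t \<in> J \<Longrightarrow> gbeta2 \<gamma> I2 t = fk1 \<gamma> t + gbeta1 \<gamma> I2 t"
  by (simp add: gbeta2_def oinner_eq_inner vd_I3 inner_linear inner_frame)

end

section \<open>The phases \<open>r, q, p\<close>\<close>

lemma sint_eq_integral_diff:
  assumes "continuous_on {a..b} \<rho>" "0 \<in> {a..b}" "u \<in> {a..b}"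
  shows "sint 0 u \<rho> = integral {a..u} \<rho> - integral {a..0} \<rho>"
proof (cases "0 \<le> u")
  case True
  have "\<rho> integrable_on {a..u}"
    using assms by (intro integrable_continuous_real continuous_on_subset[OF assms(1)]) auto
  then have "integral {a..0} \<rho> + integral {0..u} \<rho> = integral {a..u} \<rho>"
    using Henstock_Kurzweil_Integration.integral_combine[where a = a and c = 0 and b = u and f = \<rho>]
      True assms(2)
    by simp
  then show ?thesis
    using True by (simp add: sint_def)
next
  case False
  have "\<rho> integrable_on {a..0}"
    using assms by (intro integrable_continuous_real continuous_on_subset[OF assms(1)]) auto
  then have "integral {a..u} \<rho> + integral {u..0} \<rho> = integral {a..0} \<rho>"
    using Henstock_Kurzweil_Integration.integral_combine[where a = a and c = u and b = 0 and f = \<rho>]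
      False assms(3)
    by simp
  then show ?thesis
    using False by (simp add: sint_def)
qed

lemma has_real_derivative_sint:
  assumes J: "open J" "is_interval J" "0 \<in> J" and "continuous_on J \<rho>" and s: "s \<in> J"
  shows "((\<lambda>t. sint 0 t \<rho>) has_real_derivative \<rho> s) (at s)"
proof -
  obtain e0 e1 where e: "e0 > 0" "cball 0 e0 \<subseteq> J" "e1 > 0" "cball s e1 \<subseteq> J"
    using open_contains_cball J s by meson
  define a b where "a = min 0 s - min e0 e1" and "b = max 0 s + min e0 e1"
  have "a \<in> J \<and> b \<in> J"
  proof (cases "0 \<le> s")
    case True
    then have "a \<in> cball 0 e0" "b \<in> cball s e1"
      using e by (simp_all add: a_def b_def dist_real_def)
    then show ?thesis
      using e by blast
  next
    case False
    then have "a \<in> cball s e1" "b \<in> cball 0 e0"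
      using e by (simp_all add: a_def b_def dist_real_def)
    then show ?thesis
      using e by blast
  qed
  then have "{a..b} \<subseteq> J"
    using mem_is_interval_1_I[OF J(2), where a = a and c = b] by auto
  then have cont: "continuous_on {a..b} \<rho>"
    using continuous_on_subset assms(4) by blast
  have s_in: "s \<in> {a<..<b}" and zero_in: "0 \<in> {a..b}"
    using e by (auto simp: a_def b_def)
  have "((\<lambda>u. integral {a..u} \<rho>) has_real_derivative \<rho> s) (at s within {a..b})"
    using integral_has_real_derivative[OF cont] s_in by simp
  then have "((\<lambda>u. integral {a..u} \<rho>) has_real_derivative \<rho> s) (at s)"
    using at_within_interior[of s "{a..b}"] s_in by simp
  then have "((\<lambda>u. integral {a..u} \<rho> - integral {a..0} \<rho>) has_real_derivative \<rho> s) (at s)"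
    using DERIV_diff[OF _ DERIV_const] by fastforce
  then show ?thesis
    by (rule has_field_derivative_transform_within_open[OF _ open_greaterThanLessThan s_in])
      (simp add: sint_eq_integral_diff[OF cont zero_in])
qed

text \<open>The sum of the three primitives has derivative zero on the interval and vanishes at \<open>0\<close>.\<close>

lemma sint_eq_minus_add:
  assumes J: "open J" "is_interval J" "0 \<in> J"
    and cont: "continuous_on J \<rho>1" "continuous_on J \<rho>2"
    and \<rho>3: "\<forall>t\<in>J. \<rho>3 t = - (\<rho>1 t + \<rho>2 t)" and s: "s \<in> J"
  shows "sint 0 s \<rho>3 = - (sint 0 s \<rho>1 + sint 0 s \<rho>2)"
proof -
  define F where "F t = sint 0 t \<rho>1 + sint 0 t \<rho>2 + sint 0 t \<rho>3" for t
  have "continuous_on J (\<lambda>t. - (\<rho>1 t + \<rho>2 t))"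
    using cont by (intro continuous_intros)
  then have "continuous_on J \<rho>3"
    by (rule continuous_on_eq) (use \<rho>3 in simp)
  then have "(F has_real_derivative \<rho>1 t + \<rho>2 t + \<rho>3 t) (at t)" if "t \<in> J" for t
    unfolding F_def using cont that
    by (intro DERIV_add has_real_derivative_sint[OF J]) auto
  then have "(F has_real_derivative 0) (at t within J)" if "t \<in> J" for t
    using \<rho>3 that by (simp add: has_field_derivative_at_within)
  then obtain c where "\<forall>t\<in>J. F t = c"
    using has_field_derivative_zero_constant[OF is_interval_convex[OF J(2)]] by blast
  then have "F s = F 0"
    using s J(3) by simp
  then show ?thesis
    by (simp add: F_def sint_def)
qed

lemma has_vector_derivative_phase:
  assumes "((\<lambda>t. sint 0 t \<rho>) has_real_derivative \<rho> s) (at s)"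
  shows "(phase \<rho> has_vector_derivative - \<i> * complex_of_real (\<rho> s) * phase \<rho> s) (at s)"
proof -
  define f where "f t = - \<i> * complex_of_real (sint 0 t \<rho>)" for t
  have "(f has_vector_derivative - \<i> * complex_of_real (\<rho> s)) (at s)"
    unfolding f_def
    using bounded_linear.has_vector_derivative[OF bounded_linear_mult_right
        has_vector_derivative_of_real[OF assms]] .
  then have "((exp \<circ> f) has_vector_derivative - \<i> * complex_of_real (\<rho> s) * exp (f s)) (at s)"
    by (rule field_vector_diff_chain_at[OF _ DERIV_exp])
  then have "((\<lambda>t. complex_of_real (1 / sqrt 2) * (exp \<circ> f) t) has_vector_derivative
      complex_of_real (1 / sqrt 2) * (- \<i> * complex_of_real (\<rho> s) * exp (f s))) (at s)"
    by (rule bounded_linear.has_vector_derivative[OF bounded_linear_mult_right])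
  then show ?thesis
    by (simp add: phase_def[abs_def] f_def ac_simps)
qed

lemma phase_mult_cnj: "phase \<rho> s * cnj (phase \<rho> s) = 1/2"
proof -
  have "phase \<rho> s * cnj (phase \<rho> s) = complex_of_real (1 / sqrt 2) * complex_of_real (1 / sqrt 2) *
      (exp (- \<i> * complex_of_real (sint 0 s \<rho>)) * exp (\<i> * complex_of_real (sint 0 s \<rho>)))"
    by (simp add: phase_def exp_cnj)
  also have "exp (- \<i> * complex_of_real (sint 0 s \<rho>)) * exp (\<i> * complex_of_real (sint 0 s \<rho>)) = 1"
    by (simp flip: exp_add)
  finally show ?thesis
    by (simp flip: of_real_mult)
qed

lemma phase_eq_cnj_mult:
  assumes "sint 0 s \<rho>3 = - (sint 0 s \<rho>1 + sint 0 s \<rho>2)"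
  shows "phase \<rho>3 s = complex_of_real (sqrt 2) * cnj (phase \<rho>1 s) * cnj (phase \<rho>2 s)"
proof -
  have "complex_of_real (sqrt 2) * cnj (phase \<rho>1 s) * cnj (phase \<rho>2 s) =
      complex_of_real (sqrt 2 * (1 / sqrt 2) * (1 / sqrt 2)) *
      exp (\<i> * complex_of_real (sint 0 s \<rho>1) + \<i> * complex_of_real (sint 0 s \<rho>2))"
    by (simp add: phase_def exp_cnj exp_add)
  also have "\<dots> = phase \<rho>3 s"
    by (simp add: phase_def assms algebra_simps)
  finally show ?thesis ..
qed

context g2_framed_curve
begin

lemma continuous_on_rho:
  "continuous_on J (rho1 \<gamma>)" "continuous_on J (rho2 \<gamma> I2)" "continuous_on J (rho3 \<gamma> I2)"
  unfolding rho1_def[abs_def] rho2_def[abs_def] rho3_def[abs_def] oinner_eq_inner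
  using smooth_on_vd[OF open_J] smooth_I1 smooth_I2 smooth_I3 smooth_I5 smooth_I6 smooth_I7
  by (auto intro!: smooth_on_continuous_on[OF open_J] smooth_on_inner[OF open_J])

lemmas has_real_derivative_sint_rho =
  has_real_derivative_sint[OF open_J interval_J zero_in_J continuous_on_rho(1)]
  has_real_derivative_sint[OF open_J interval_J zero_in_J continuous_on_rho(2)]
  has_real_derivative_sint[OF open_J interval_J zero_in_J continuous_on_rho(3)]

lemma has_vector_derivative_cr:
  "t \<in> J \<Longrightarrow> (cr \<gamma> has_vector_derivative - \<i> * complex_of_real (rho1 \<gamma> t) * cr \<gamma> t) (at t)"
  unfolding cr_def by (rule has_vector_derivative_phase[OF has_real_derivative_sint_rho(1)])

lemma has_vector_derivative_cq:
  "t \<in> J \<Longrightarrow> (cq \<gamma> I2 has_vector_derivative - \<i> * complex_of_real (rho2 \<gamma> I2 t) * cq \<gamma> I2 t) (at t)"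
  unfolding cq_def by (rule has_vector_derivative_phase[OF has_real_derivative_sint_rho(2)])

lemma has_vector_derivative_cp:
  "t \<in> J \<Longrightarrow> (cp \<gamma> I2 has_vector_derivative - \<i> * complex_of_real (rho3 \<gamma> I2 t) * cp \<gamma> I2 t) (at t)"
  unfolding cp_def by (rule has_vector_derivative_phase[OF has_real_derivative_sint_rho(3)])

lemma cp_eq: "t \<in> J \<Longrightarrow> cp \<gamma> I2 t = complex_of_real (sqrt 2) * cnj (cr \<gamma> t) * cnj (cq \<gamma> I2 t)"
  unfolding cp_def cr_def cq_def
  by (intro phase_eq_cnj_mult
      sint_eq_minus_add[OF open_J interval_J zero_in_J continuous_on_rho(1,2)])
    (auto simp: rho3_eq)

end

section \<open>The complexified frame\<close>

lemma bounded_bilinear_cscale: "bounded_bilinear cscale"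
proof -
  have "bilinear cscale"
    by (simp add: bilinear_def linear_iff cscale_def split_beta algebra_simps)
  then show ?thesis
    by (rule bilinear_conv_bounded_bilinear[THEN iffD1])
qed

lemma bounded_linear_emb: "bounded_linear emb"
  by (simp add: linear_conv_bounded_linear[symmetric] linear_iff emb_def)

lemma bounded_linear_cconj: "bounded_linear cconj"
  by (simp add: linear_conv_bounded_linear[symmetric] linear_iff cconj_def split_beta)

definition ccoord :: "oct \<Rightarrow> coct \<Rightarrow> complex" where
  "ccoord b X = Complex (fst X \<bullet> b) (snd X \<bullet> b)"

lemma ccoord_simps:
  "ccoord b (X + Y) = ccoord b X + ccoord b Y"
  "ccoord b (X - Y) = ccoord b X - ccoord b Y"
  "ccoord b (- X) = - ccoord b X"
  "ccoord b (cscale c X) = c * ccoord b X"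
  "ccoord b (cconj X) = cnj (ccoord b X)"
  "ccoord b (emb x) = complex_of_real (x \<bullet> b)"
  by (simp_all add: ccoord_def complex_eq_iff cscale_def cconj_def emb_def split_beta
      inner_add_left inner_diff_left)

lemma has_vector_derivative_cscale_emb:
  assumes "(c has_vector_derivative c') (at t)" "(x has_vector_derivative x') (at t)"
    and "(y has_vector_derivative y') (at t)"
  shows "((\<lambda>t. cscale (c t) (emb (x t) - cscale \<i> (emb (y t)))) has_vector_derivative
    cscale (c t) (emb x' - cscale \<i> (emb y')) + cscale c' (emb (x t) - cscale \<i> (emb (y t))))
    (at t)"
proof -
  have "((\<lambda>t. emb (x t)) has_vector_derivative emb x') (at t)"
    using bounded_linear.has_vector_derivative[OF bounded_linear_emb assms(2)] .
  moreover have "((\<lambda>t. cscale \<i> (emb (y t))) has_vector_derivative cscale \<i> (emb y')) (at t)"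
    using bounded_linear.has_vector_derivative[OF
        bounded_bilinear.bounded_linear_right[OF bounded_bilinear_cscale]
        bounded_linear.has_vector_derivative[OF bounded_linear_emb assms(3)]] .
  ultimately have "((\<lambda>t. emb (x t) - cscale \<i> (emb (y t))) has_vector_derivative
      emb x' - cscale \<i> (emb y')) (at t)"
    by (rule has_vector_derivative_diff)
  then show ?thesis
    by (rule bounded_bilinear.has_vector_derivative[OF bounded_bilinear_cscale assms(1)])
qed

lemma vd_cscale_emb:
  assumes "(c has_vector_derivative c') (at t)" "(x has_vector_derivative x') (at t)"
    and "(y has_vector_derivative y') (at t)"
  shows "vd (\<lambda>t. cscale (c t) (emb (x t) - cscale \<i> (emb (y t)))) t =
      cscale (c t) (emb x' - cscale \<i> (emb y')) + cscale c' (emb (x t) - cscale \<i> (emb (y t)))"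
    and "vd (\<lambda>t. cconj (cscale (c t) (emb (x t) - cscale \<i> (emb (y t))))) t =
      cconj (cscale (c t) (emb x' - cscale \<i> (emb y')) +
        cscale c' (emb (x t) - cscale \<i> (emb (y t))))"
  using has_vector_derivative_cscale_emb[OF assms]
    bounded_linear.has_vector_derivative[OF bounded_linear_cconj
      has_vector_derivative_cscale_emb[OF assms]]
  by (simp_all add: vd_def vector_derivative_at)

lemma vd_emb: "(x has_vector_derivative x') (at t) \<Longrightarrow> vd (\<lambda>t. emb (x t)) t = emb x'"
  using bounded_linear.has_vector_derivative[OF bounded_linear_emb]
  by (simp add: vd_def vector_derivative_at)

lemma sqrt2_mult_self: "complex_of_real (sqrt 2) * complex_of_real (sqrt 2) = 2"
  by (simp flip: of_real_mult)

lemma divide_sqrt2: "z / complex_of_real (sqrt 2) = z * complex_of_real (sqrt 2) / 2"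
  using sqrt2_mult_self by (simp add: field_simps)

context g2_framed_curve
begin

lemma coct_eqI:
  assumes t: "t \<in> J"
    and "ccoord oone X = ccoord oone Y" "ccoord (fI1 \<gamma> t) X = ccoord (fI1 \<gamma> t) Y"
    "ccoord (I2 t) X = ccoord (I2 t) Y" "ccoord (fI3 \<gamma> I2 t) X = ccoord (fI3 \<gamma> I2 t) Y"
    "ccoord (fI4 \<gamma> t) X = ccoord (fI4 \<gamma> t) Y" "ccoord (fI5 \<gamma> t) X = ccoord (fI5 \<gamma> t) Y"
    "ccoord (fI6 \<gamma> I2 t) X = ccoord (fI6 \<gamma> I2 t) Y" "ccoord (fI7 \<gamma> I2 t) X = ccoord (fI7 \<gamma> I2 t) Y"
  shows "X = Y"
proof -
  have "fst X = fst Y" "snd X = snd Y"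
    using assms(2-) by (intro frame_eqI[OF t]; simp add: ccoord_def complex_eq_iff)+
  then show ?thesis
    by (simp add: prod_eq_iff)
qed

lemma cr_mult_cnj: "cr \<gamma> t * cnj (cr \<gamma> t) = 1/2"
  unfolding cr_def by (rule phase_mult_cnj)

lemma cq_mult_cnj: "cq \<gamma> I2 t * cnj (cq \<gamma> I2 t) = 1/2"
  unfolding cq_def by (rule phase_mult_cnj)

lemmas complex_frame_simps = ccoord_simps ce1_def ce2_def ce3_def ce4_def phi1_def phi2_def phi3_def
  inner_add_left inner_diff_left inner_scaleR_left inner_minus_left
  of_real_add of_real_diff of_real_minus of_real_mult of_real_0 of_real_1
  complex_cnj_add complex_cnj_diff complex_cnj_minus complex_cnj_mult complex_cnj_complex_of_real
  complex_cnj_cnj complex_cnj_i complex_cnj_divide complex_cnj_power complex_cnj_numeral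
  complex_cnj_one complex_cnj_zero divide_sqrt2

lemma vd_ce4:
  assumes s: "s \<in> J"
  shows "vd (ce4 \<gamma>) s = cscale (phi1 \<gamma> s) (ce1 \<gamma> s) + cscale (cnj (phi1 \<gamma> s)) (cconj (ce1 \<gamma> s))"
proof -
  have vd_ce4_eq: "vd (ce4 \<gamma>) s = emb (fk1 \<gamma> s *\<^sub>R fI1 \<gamma> s)"
    using vd_emb[OF has_vector_derivative_I4[OF s]] vd_I4[OF s] by (simp add: ce4_def[abs_def])
  show ?thesis
    unfolding vd_ce4_eq
    by (intro coct_eqI[OF s]; insert cr_mult_cnj[of s] cq_mult_cnj[of s] sqrt2_mult_self i_squared;
        simp only: complex_frame_simps inner_frame[OF s];
        ((simp; fail) | (simp add: algebra_simps; fail) | algebra))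
qed

lemma vd_ce1:
  assumes s: "s \<in> J"
  shows "vd (ce1 \<gamma>) s = cscale (- cnj (phi1 \<gamma> s)) (ce4 \<gamma> s) + cscale (phi2 \<gamma> I2 s) (ce2 \<gamma> I2 s)"
  unfolding ce1_def[abs_def]
    vd_cscale_emb(1)[OF has_vector_derivative_cr[OF s] has_vector_derivative_I1[OF s]
      has_vector_derivative_I5[OF s]]
  by (intro coct_eqI[OF s]; insert cr_mult_cnj[of s] cq_mult_cnj[of s] sqrt2_mult_self i_squared;
      simp only: vd_I1[OF s] vd_I5[OF s] complex_frame_simps inner_frame[OF s];
      ((simp; fail) | (simp add: algebra_simps; fail) | algebra))

lemma vd_ce2:
  assumes s: "s \<in> J"
  shows "vd (ce2 \<gamma> I2) s = cscale (- cnj (phi2 \<gamma> I2 s)) (ce1 \<gamma> s)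
    + cscale (phi3 \<gamma> I2 s) (ce3 \<gamma> I2 s)
    - cscale (\<i> / complex_of_real (sqrt 2) * phi1 \<gamma> s) (cconj (ce3 \<gamma> I2 s))"
  unfolding ce2_def[abs_def]
    vd_cscale_emb(1)[OF has_vector_derivative_cq[OF s] has_vector_derivative_I2[OF s]
      has_vector_derivative_I6[OF s]]
  by (intro coct_eqI[OF s]; insert cr_mult_cnj[of s] cq_mult_cnj[of s] sqrt2_mult_self i_squared;
      simp only: vd_I2[OF s] vd_I6[OF s] cp_eq[OF s] gbeta2_eq[OF s] complex_frame_simps
        inner_frame[OF s];
      ((simp; fail) | (simp add: algebra_simps; fail) | algebra))

lemma vd_ce3:
  assumes s: "s \<in> J"
  shows "vd (ce3 \<gamma> I2) s = cscale (- cnj (phi3 \<gamma> I2 s)) (ce2 \<gamma> I2 s)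
    + cscale (\<i> / complex_of_real (sqrt 2) * phi1 \<gamma> s) (cconj (ce2 \<gamma> I2 s))"
  unfolding ce3_def[abs_def] vd_cscale_emb(1)[OF has_vector_derivative_minus[OF
      has_vector_derivative_cp[OF s]] has_vector_derivative_I3[OF s] has_vector_derivative_I7[OF s]]
  by (intro coct_eqI[OF s]; insert cr_mult_cnj[of s] cq_mult_cnj[of s] sqrt2_mult_self i_squared;
      simp only: vd_I3[OF s] vd_I7[OF s] cp_eq[OF s] gbeta2_eq[OF s] rho3_eq[OF s]
        complex_frame_simps inner_frame[OF s];
      ((simp; fail) | (simp add: algebra_simps; fail) | algebra))

lemma vd_cconj_ce1:
  assumes s: "s \<in> J"
  shows "vd (\<lambda>t. cconj (ce1 \<gamma> t)) s = cscale (- phi1 \<gamma> s) (ce4 \<gamma> s)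
    + cscale (cnj (phi2 \<gamma> I2 s)) (cconj (ce2 \<gamma> I2 s))"
  unfolding ce1_def
    vd_cscale_emb(2)[OF has_vector_derivative_cr[OF s] has_vector_derivative_I1[OF s]
      has_vector_derivative_I5[OF s]]
  by (intro coct_eqI[OF s]; insert cr_mult_cnj[of s] cq_mult_cnj[of s] sqrt2_mult_self i_squared;
      simp only: vd_I1[OF s] vd_I5[OF s] complex_frame_simps inner_frame[OF s];
      ((simp; fail) | (simp add: algebra_simps; fail) | algebra))

lemma vd_cconj_ce2:
  assumes s: "s \<in> J"
  shows "vd (\<lambda>t. cconj (ce2 \<gamma> I2 t)) s =
    cscale (\<i> / complex_of_real (sqrt 2) * cnj (phi1 \<gamma> s)) (ce3 \<gamma> I2 s)
    - cscale (phi2 \<gamma> I2 s) (cconj (ce1 \<gamma> s)) + cscale (cnj (phi3 \<gamma> I2 s)) (cconj (ce3 \<gamma> I2 s))"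
  unfolding ce2_def
    vd_cscale_emb(2)[OF has_vector_derivative_cq[OF s] has_vector_derivative_I2[OF s]
      has_vector_derivative_I6[OF s]]
  by (intro coct_eqI[OF s]; insert cr_mult_cnj[of s] cq_mult_cnj[of s] sqrt2_mult_self i_squared;
      simp only: vd_I2[OF s] vd_I6[OF s] cp_eq[OF s] gbeta2_eq[OF s] complex_frame_simps
        inner_frame[OF s];
      ((simp; fail) | (simp add: algebra_simps; fail) | algebra))

lemma vd_cconj_ce3:
  assumes s: "s \<in> J"
  shows "vd (\<lambda>t. cconj (ce3 \<gamma> I2 t)) s =
    cscale (- (\<i> / complex_of_real (sqrt 2)) * cnj (phi1 \<gamma> s)) (ce2 \<gamma> I2 s)
    - cscale (phi3 \<gamma> I2 s) (cconj (ce2 \<gamma> I2 s))"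
  unfolding ce3_def vd_cscale_emb(2)[OF has_vector_derivative_minus[OF
      has_vector_derivative_cp[OF s]] has_vector_derivative_I3[OF s] has_vector_derivative_I7[OF s]]
  by (intro coct_eqI[OF s]; insert cr_mult_cnj[of s] cq_mult_cnj[of s] sqrt2_mult_self i_squared;
      simp only: vd_I3[OF s] vd_I7[OF s] cp_eq[OF s] gbeta2_eq[OF s] rho3_eq[OF s]
        complex_frame_simps inner_frame[OF s];
      ((simp; fail) | (simp add: algebra_simps; fail) | algebra))

end

theorem theorem2:
  fixes \<gamma> :: "real \<Rightarrow> oct" and I2 :: "real \<Rightarrow> oct" and J :: "real set"
  assumes J: "open J" "is_interval J" "0 \<in> J"
    and smooth: "smooth_on J \<gamma>"
    and im: "\<forall>s\<in>J. \<gamma> s \<in> ImO"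
    and unit_speed: "\<forall>s\<in>J. onorm (vd \<gamma> s) = 1"
    and k1_pos: "\<forall>s\<in>J. fk1 \<gamma> s > 0"
    and I2_choice:
      "(\<forall>s\<in>J. fkappa2 \<gamma> s > 0 \<and> I2 s = fI2pos \<gamma> s) \<or>
       ((\<forall>s\<in>J. fkappa2 \<gamma> s = 0) \<and> smooth_on J I2 \<and>
        (\<forall>s\<in>J. I2 s \<in> ImO \<and> onorm (I2 s) = 1 \<and> oinner (I2 s) (fI4 \<gamma> s) = 0 \<and>
                oinner (I2 s) (fI1 \<gamma> s) = 0 \<and> oinner (I2 s) (fI5 \<gamma> s) = 0))"
    and s: "s \<in> J"
  shows
    "(vd (ce4 \<gamma>) s = cscale (phi1 \<gamma> s) (ce1 \<gamma> s) + cscale (cnj (phi1 \<gamma> s)) (cconj (ce1 \<gamma> s))) \<and>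
    (vd (ce1 \<gamma>) s = cscale (- cnj (phi1 \<gamma> s)) (ce4 \<gamma> s) + cscale (phi2 \<gamma> I2 s) (ce2 \<gamma> I2 s)) \<and>
    (vd (ce2 \<gamma> I2) s = cscale (- cnj (phi2 \<gamma> I2 s)) (ce1 \<gamma> s) + cscale (phi3 \<gamma> I2 s) (ce3 \<gamma> I2 s)
        - cscale (\<i> / complex_of_real (sqrt 2) * phi1 \<gamma> s) (cconj (ce3 \<gamma> I2 s))) \<and>
    (vd (ce3 \<gamma> I2) s = cscale (- cnj (phi3 \<gamma> I2 s)) (ce2 \<gamma> I2 s)
        + cscale (\<i> / complex_of_real (sqrt 2) * phi1 \<gamma> s) (cconj (ce2 \<gamma> I2 s))) \<and>
    (vd (\<lambda>t. cconj (ce1 \<gamma> t)) s = cscale (- phi1 \<gamma> s) (ce4 \<gamma> s)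
        + cscale (cnj (phi2 \<gamma> I2 s)) (cconj (ce2 \<gamma> I2 s))) \<and>
    (vd (\<lambda>t. cconj (ce2 \<gamma> I2 t)) s = cscale (\<i> / complex_of_real (sqrt 2) * cnj (phi1 \<gamma> s)) (ce3 \<gamma> I2 s)
        - cscale (phi2 \<gamma> I2 s) (cconj (ce1 \<gamma> s)) + cscale (cnj (phi3 \<gamma> I2 s)) (cconj (ce3 \<gamma> I2 s))) \<and>
    (vd (\<lambda>t. cconj (ce3 \<gamma> I2 t)) s = cscale (- (\<i> / complex_of_real (sqrt 2)) * cnj (phi1 \<gamma> s)) (ce2 \<gamma> I2 s)
        - cscale (phi3 \<gamma> I2 s) (cconj (ce2 \<gamma> I2 s)))"
proof -
  interpret unit_speed_curve \<gamma> J
    using J(1) smooth im unit_speed k1_pos by unfold_locales (simp_all add: onorm_eq_norm)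
  interpret g2_framed_curve \<gamma> J I2
    by (rule g2_framed_curve_if_admissible[unfolded admissible_I2_def, OF I2_choice J(2,3)])
  show ?thesis
    using vd_ce4[OF s] vd_ce1[OF s] vd_ce2[OF s] vd_ce3[OF s] vd_cconj_ce1[OF s] vd_cconj_ce2[OF s]
      vd_cconj_ce3[OF s]
    by (intro conjI)
qed

end
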